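(* Let $Y_1$ and $Y_2$ be independent positive random variables. Suppose that $\mathbb{P}(Y_1>u)>0$ for all $u$ and that there is a positive function $a(\cdot)$, regularly varying at infinity with index $-\tau$ for some $\tau\ge -1$ (i.e. $\lim_{u\to\infty}a(ux)/a(u)=x^{-\tau}$ for all $x>0$), such that $$\lim_{u\to\infty}\frac{\mathbb{P}(Y_1>u+a(u)t)}{\mathbb{P}(Y_1>u)}=\exp(-t)\quad\text{for all } t\ge 0.$$ Suppose further that the distribution of $Y_2$ has right endpoint equal to $1$. Then $X=Y_1Y_2$ satisfies $$\lim_{u\to\infty}\frac{\mathbb{P}(X>u+a(u)t)}{\mathbb{P}(X>u)}=\exp(-t)\quad\text{for all } t\ge 0,$$ i.e. $X$ belongs to the Gumbel max-domain of attraction with the same scaling function $a$.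
   Context: A random variable $U$ is said to be in the Gumbel max-domain of attraction with scaling function $a$ (written $U\in GMDA(a)$) if $\lim_{u\to\infty}\mathbb{P}(U>u+a(u)t)/\mathbb{P}(U>u)=\exp(-t)$ for all $t\ge 0$. *)

theory Defs
  imports "HOL-Probability.Probability"
begin

definition GMDA :: "'s measure \<Rightarrow> ('s \<Rightarrow> real) \<Rightarrow> (real \<Rightarrow> real) \<Rightarrow> bool" where
  "GMDA M U a \<longleftrightarrow>
     (\<forall>t::real. t \<ge> 0 \<longrightarrow>
        ((\<lambda>u. measure M {w \<in> space M. U w > u + a u * t} / measure M {w \<in> space M. U w > u})
           \<longlongrightarrow> exp (- t)) at_top)"

definition regularly_varying :: "(real \<Rightarrow> real) \<Rightarrow> real \<Rightarrow> bool" where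
  "regularly_varying a \<rho> \<longleftrightarrow>
     (\<forall>x::real. x > 0 \<longrightarrow> ((\<lambda>u. a (u * x) / a u) \<longlongrightarrow> x powr \<rho>) at_top)"

definition right_endpoint :: "'s measure \<Rightarrow> ('s \<Rightarrow> real) \<Rightarrow> ereal" where
  "right_endpoint M Y = (SUP x \<in> {x::real. measure M {w \<in> space M. Y w \<le> x} < 1}. ereal x)"

end

theory Submission
  imports Defs
begin

text \<open>
  Let \<open>F\<close> be the tail of \<open>Y1\<close>. By independence \<open>P(Y1 Y2 > v) = E F(v / Y2)\<close>, and since
  \<open>Y2 \<le> 1\<close> almost surely with mass arbitrarily close to \<open>1\<close>, this mixture is governed by the
  values of \<open>Y2\<close> near \<open>1\<close>: the part where \<open>Y2 \<le> c < 1\<close> is negligible because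
  \<open>F(c\<^sup>-\<^sup>1 u) = o(F u)\<close>, which follows from \<open>a(u) = o(u)\<close>. For \<open>Y2 = y\<close> near \<open>1\<close> the shifted
  argument \<open>(u + a(u) t) / y\<close> equals \<open>v + a(v) t'\<close> with \<open>v = u / y\<close> and \<open>t'\<close> close to \<open>t\<close>, by
  the uniform convergence of \<open>a(e\<^sup>h u) / a(u)\<close> to \<open>e\<^sup>-\<^sup>\<tau>\<^sup>h\<close> for \<open>h \<in> [0, 1]\<close>; so each
  conditional ratio tends to \<open>e\<^sup>-\<^sup>t\<close>.

  The uniform convergence theorem is proved without assuming \<open>a\<close> measurable: up to a factor
  close to \<open>1\<close>, \<open>a(w)\<close> is determined by a Borel condition on the tail, and a Steinhaus-type
  overlap argument on \<open>[0, 2]\<close> gives uniformity. Then \<open>a(u) = o(u)\<close>: for \<open>\<tau> > -1\<close>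
  because \<open>a(u)/u\<close> decays geometrically along \<open>e\<^sup>k u\<close>, and for \<open>\<tau> = -1\<close> because two
  consecutive Gumbel shifts cannot overshoot a single one.
\<close>

section \<open>Elementary inequalities and limits\<close>

lemma le_one_plus_mult_of_approx:
  fixes x T1 T2 \<epsilon> :: real
  assumes "0 < \<epsilon>" "\<epsilon> \<le> 1" "0 < x" "T2 < x * (1 + \<epsilon>/4)" "x * (1 - \<epsilon>/4) < T1"
  shows "T2 \<le> (1 + \<epsilon>) * T1"
proof -
  have "(1 - \<epsilon>/4) * (1 + \<epsilon>) - (1 + \<epsilon>/4) = \<epsilon> * (2 - \<epsilon>) / 4"
    by (simp add: field_simps)
  then have "1 + \<epsilon>/4 \<le> (1 - \<epsilon>/4) * (1 + \<epsilon>)"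
    using assms(1,2) by (smt (verit) divide_nonneg_pos mult_nonneg_nonneg)
  then have "x * (1 + \<epsilon>/4) \<le> x * (1 - \<epsilon>/4) * (1 + \<epsilon>)"
    using assms(3) by (simp add: mult.assoc mult_left_mono)
  also have "\<dots> \<le> T1 * (1 + \<epsilon>)"
    using assms by (intro mult_right_mono) auto
  finally show ?thesis
    using assms(4) by (simp add: mult.commute)
qed

lemma ratio_bounds_of_common_approx:
  fixes x k p q \<epsilon> :: real
  assumes "0 < \<epsilon>" "\<epsilon> \<le> 1" "0 < x" "0 < k" "0 < q"
    and "k * p < x * (1 + \<epsilon>/4)" "x * (1 - \<epsilon>/4) < k * p"
    and "k * q < x * (1 + \<epsilon>/4)" "x * (1 - \<epsilon>/4) < k * q"
  shows "q \<le> (1 + \<epsilon>) * p" and "(1 - \<epsilon>) * p \<le> q"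
proof -
  have "k * q \<le> (1 + \<epsilon>) * (k * p)"
    by (rule le_one_plus_mult_of_approx[OF assms(1-3,8,7)])
  then show "q \<le> (1 + \<epsilon>) * p"
    using \<open>0 < k\<close> by (simp add: mult.left_commute)
  have "k * p \<le> (1 + \<epsilon>) * (k * q)"
    by (rule le_one_plus_mult_of_approx[OF assms(1-3,6,9)])
  then have "p \<le> (1 + \<epsilon>) * q"
    using \<open>0 < k\<close> by (simp add: mult.left_commute)
  then have "(1 - \<epsilon>) * p \<le> (1 - \<epsilon>) * ((1 + \<epsilon>) * q)"
    using assms(2) by (intro mult_left_mono) auto
  also have "\<dots> \<le> q"
    using assms(1,5) by (simp add: algebra_simps zero_le_mult_iff)
  finally show "(1 - \<epsilon>) * p \<le> q" .
qed

lemma ratio_chain_absurd: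
  fixes \<alpha> \<beta> \<gamma> \<eta> r s t :: real
  assumes "0 < \<alpha>" "\<alpha> \<le> 1" "\<beta> \<le> 1" "0 < \<gamma>" "\<gamma> < \<alpha> * \<beta>" "4 * \<eta> = \<alpha> * \<beta> - \<gamma>" "r > 0"
    and rs: "(\<beta> - \<eta>) * r < s" and st: "(\<alpha> - \<eta>) * s < t" and tr: "t < (\<gamma> + \<eta>) * r"
  shows False
proof -
  have "\<alpha> * \<beta> \<le> \<alpha>"
    using assms(1,3) by (simp add: mult_left_le)
  then have \<eta>: "0 < \<eta> \<and> \<eta> < \<alpha>"
    using assms(1,4,5,6) by (intro conjI; linarith)
  have "(\<alpha> - \<eta>) * ((\<beta> - \<eta>) * r) < (\<alpha> - \<eta>) * s"
    using rs \<eta> by (intro mult_strict_left_mono) auto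
  also have "\<dots> < (\<gamma> + \<eta>) * r"
    using st tr by linarith
  finally have "(\<alpha> - \<eta>) * (\<beta> - \<eta>) < \<gamma> + \<eta>"
    using \<open>r > 0\<close> by (simp add: mult.assoc)
  moreover have "\<eta> * (\<alpha> + \<beta>) \<le> \<eta> * 2"
    using \<eta> assms(2,3) by (intro mult_left_mono) auto
  then have "\<alpha> * \<beta> - 2 * \<eta> \<le> (\<alpha> - \<eta>) * (\<beta> - \<eta>)"
    by (simp add: algebra_simps) (smt (verit) zero_le_square power2_eq_square)
  ultimately show False
    using assms(6) \<eta> by linarith
qed

lemma exp_minus_diff_le:
  fixes s t :: real
  assumes "0 \<le> s" "s \<le> t"
  shows "exp (-s) - exp (-t) \<le> t - s"
proof -
  have "exp (-s) - exp (-t) = exp (-s) * (1 - exp (-(t-s)))"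
    by (simp add: algebra_simps flip: exp_add)
  also have "\<dots> \<le> 1 - exp (-(t-s))"
    using assms by (intro mult_left_le_one_le) auto
  also have "\<dots> \<le> t - s"
    using exp_ge_add_one_self[of "-(t-s)"] by linarith
  finally show ?thesis .
qed

lemma eventually_le_of_geometric_decay:
  fixes g :: "real \<Rightarrow> real"
  assumes "U > 0" "0 \<le> \<rho>" "\<rho> < 1" "\<delta> > 0"
    and base: "\<And>h. h \<in> {0..1} \<Longrightarrow> g (exp h * U) \<le> C"
    and step: "\<And>u. u \<ge> U \<Longrightarrow> g (exp 1 * u) \<le> \<rho> * g u"
  shows "\<exists>V. \<forall>u\<ge>V. g u \<le> \<delta>"
proof -
  have bound: "g (exp (real k + h) * U) \<le> \<rho> ^ k * C" if h: "h \<in> {0..1}" for k h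
  proof (induction k)
    case 0
    show ?case using base h by simp
  next
    case (Suc k)
    have "U \<le> exp (real k + h) * U"
      using h \<open>U > 0\<close> by simp
    then have "g (exp 1 * (exp (real k + h) * U)) \<le> \<rho> * g (exp (real k + h) * U)"
      by (rule step)
    also have "\<dots> \<le> \<rho> * (\<rho> ^ k * C)"
      using Suc.IH \<open>0 \<le> \<rho>\<close> by (rule mult_left_mono)
    finally show ?case
      by (simp add: exp_add algebra_simps)
  qed
  have "(\<lambda>k. \<rho> ^ k * C) \<longlonglongrightarrow> 0"
    using assms(2,3) by (intro tendsto_mult_left_zero LIMSEQ_power_zero) simp
  then have "\<forall>\<^sub>F k in sequentially. \<rho> ^ k * C < \<delta>"
    using \<open>\<delta> > 0\<close> by (rule order_tendstoD(2))
  then obtain K where K: "\<And>k. k \<ge> K \<Longrightarrow> \<rho> ^ k * C < \<delta>"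
    by (auto simp: eventually_sequentially)
  show ?thesis
  proof (intro exI[of _ "exp (real K) * U"] allI impI)
    fix u assume u: "exp (real K) * U \<le> u"
    then have "u > 0"
      using \<open>U > 0\<close> by (smt (verit) exp_gt_zero mult_pos_pos)
    define L where "L = ln (u / U)"
    have "exp (real K) \<le> u / U"
      using u \<open>U > 0\<close> by (simp add: le_divide_eq)
    then have "real K \<le> L"
      using \<open>u > 0\<close> \<open>U > 0\<close> by (simp add: L_def ln_ge_iff)
    define k where "k = nat \<lfloor>L\<rfloor>"
    have "real k = of_int \<lfloor>L\<rfloor>"
      using \<open>real K \<le> L\<close> by (simp add: k_def)
    then have "0 \<le> L - real k" "L - real k \<le> 1"
      using of_int_floor_le[of L] real_of_int_floor_add_one_gt[of L] by linarith+
    then have "L - real k \<in> {0..1}"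
      by simp
    moreover have "K \<le> k"
      using \<open>real K \<le> L\<close> by (simp add: k_def le_nat_floor)
    moreover have "u = exp (real k + (L - real k)) * U"
      using \<open>u > 0\<close> \<open>U > 0\<close> by (simp add: L_def)
    ultimately show "g u \<le> \<delta>"
      using bound K by (metis less_imp_le order_trans)
  qed
qed

lemma tendsto_ratio_of_eventual_bounds:
  fixes f g :: "real \<Rightarrow> real"
  assumes pos: "\<forall>\<^sub>F u in at_top. g u > 0"
    and bounds: "\<And>\<epsilon>. \<epsilon> > 0 \<Longrightarrow> \<forall>\<^sub>F u in at_top. (c - \<epsilon>) * g u \<le> f u \<and> f u \<le> (c + \<epsilon>) * g u"
  shows "((\<lambda>u. f u / g u) \<longlongrightarrow> c) at_top"
proof (rule order_tendstoI)
  fix y assume "y < c"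
  have "\<forall>\<^sub>F u in at_top. (c - (c - y)/2) * g u \<le> f u"
    using bounds[of "(c - y)/2"] \<open>y < c\<close> by (auto elim: eventually_mono)
  with pos show "\<forall>\<^sub>F u in at_top. y < f u / g u"
  proof eventually_elim
    case (elim u)
    have "y < c - (c - y)/2"
      using \<open>y < c\<close> by (simp add: field_simps)
    also have "\<dots> \<le> f u / g u"
      using elim by (simp add: le_divide_eq)
    finally show ?case .
  qed
next
  fix y assume "c < y"
  have "\<forall>\<^sub>F u in at_top. f u \<le> (c + (y - c)/2) * g u"
    using bounds[of "(y - c)/2"] \<open>c < y\<close> by (auto elim: eventually_mono)
  with pos show "\<forall>\<^sub>F u in at_top. f u / g u < y"
  proof eventually_elim
    case (elim u)
    have "f u / g u \<le> c + (y - c)/2"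
      using elim by (simp add: divide_le_eq)
    also have "\<dots> < y"
      using \<open>c < y\<close> by (simp add: field_simps)
    finally show ?case .
  qed
qed

lemma incseq_translate_overlap:
  fixes A B :: "nat \<Rightarrow> real set"
  assumes "incseq A" "incseq B" "\<And>m. A m \<in> sets borel" "\<And>m. B m \<in> sets borel"
    and "(\<Union>m. A m) = {0..2}" "(\<Union>m. B m) = {0..1}"
  shows "\<exists>m. \<forall>h\<in>{0..1}. \<exists>z\<in>A m. z - h \<in> B m"
proof -
  have "(\<lambda>m. measure lborel (A m)) \<longlonglongrightarrow> 2"
    using Lim_measure_incseq[of A lborel] assms by auto
  then have "\<forall>\<^sub>F m in sequentially. measure lborel (A m) > 3/2"
    by (rule order_tendstoD(1)) simp
  moreover have "(\<lambda>m. measure lborel (B m)) \<longlonglongrightarrow> 1"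
    using Lim_measure_incseq[of B lborel] assms by auto
  then have "\<forall>\<^sub>F m in sequentially. measure lborel (B m) > 1/2"
    by (rule order_tendstoD(1)) simp
  ultimately have "\<forall>\<^sub>F m in sequentially. measure lborel (A m) > 3/2 \<and> measure lborel (B m) > 1/2"
    by eventually_elim simp
  then obtain m where mA: "measure lborel (A m) > 3/2" and mB: "measure lborel (B m) > 1/2"
    by (auto simp: eventually_sequentially)
  have A_sub: "A m \<subseteq> {0..2}" and B_sub: "B m \<subseteq> {0..1}"
    using assms(5,6) by auto
  have "\<exists>z\<in>A m. z - h \<in> B m" if h: "h \<in> {0..1}" for h
  proof (rule ccontr)
    assume no_overlap: "\<not> (\<exists>z\<in>A m. z - h \<in> B m)"
    define C where "C = (\<lambda>z. z - h) -` B m"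
    have C_sets: "C \<in> sets borel"
      using measurable_sets[of "\<lambda>z::real. z - h" borel borel "B m"] assms(4) by (simp add: C_def)
    have "emeasure lborel C = emeasure (distr lborel borel ((+) (- h))) (B m)"
      using assms(4) by (subst emeasure_distr) (auto simp: C_def intro!: arg_cong[where f="emeasure lborel"])
    then have "measure lborel C = measure lborel (B m)"
      by (simp add: lborel_distr_plus measure_def)
    moreover have C_sub: "C \<subseteq> {0..2}"
      using B_sub h by (auto simp: C_def)
    moreover have "A m \<inter> C = {}"
      using no_overlap by (auto simp: C_def)
    moreover have "emeasure lborel S \<noteq> \<infinity>" if "S \<subseteq> {0..2}" "S \<in> sets borel" for S :: "real set"
      using emeasure_mono[OF that(1), of lborel] by (auto simp: top_unique)
    ultimately have "measure lborel (A m \<union> C) = measure lborel (A m) + measure lborel (B m)"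
      using A_sub assms(3) C_sets by (subst measure_Union) auto
    moreover have "measure lborel (A m \<union> C) \<le> measure lborel {0..2::real}"
      using A_sub C_sub assms(3) C_sets by (intro measure_mono_fmeasurable) (auto simp: fmeasurable_def)
    ultimately show False
      using mA mB by simp
  qed
  then show ?thesis by blast
qed

section \<open>Right endpoints and products of independent variables\<close>

context prob_space
begin

lemma prob_gt_right_endpoint:
  assumes "right_endpoint M Y = ereal c" and [measurable]: "Y \<in> borel_measurable M"
  shows "prob {w \<in> space M. Y w > c} = 0"
proof -
  have null: "{w \<in> space M. Y w > x} \<in> null_sets M" if "x > c" for x
  proof -
    have "\<not> prob {w \<in> space M. Y w \<le> x} < 1"
    proof
      assume "prob {w \<in> space M. Y w \<le> x} < 1"
      then have "ereal x \<le> right_endpoint M Y"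
        unfolding right_endpoint_def by (intro SUP_upper) simp
      with assms(1) that show False by simp
    qed
    then have "prob (space M - {w \<in> space M. Y w \<le> x}) = 0"
      using prob_le_1[of "{w \<in> space M. Y w \<le> x}"] by (simp add: prob_compl)
    moreover have "space M - {w \<in> space M. Y w \<le> x} = {w \<in> space M. Y w > x}"
      by auto
    ultimately show ?thesis
      by (simp add: emeasure_eq_measure null_sets_def)
  qed
  have "{w \<in> space M. Y w > c} = (\<Union>n. {w \<in> space M. Y w > c + 1 / Suc n})"
  proof safe
    fix w assume "w \<in> space M" "Y w > c"
    then obtain n :: nat where "1 / Suc n < Y w - c"
      by (metis reals_Archimedean diff_gt_0_iff_gt inverse_eq_divide)
    with \<open>w \<in> space M\<close> show "w \<in> (\<Union>n. {w \<in> space M. Y w > c + 1 / Suc n})"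
      by (intro UN_I[of n]) auto
  next
    fix w n assume "c + 1 / real (Suc n) < Y w"
    moreover have "0 < 1 / real (Suc n)" by simp
    ultimately show "c < Y w" by linarith
  qed
  also have "\<dots> \<in> null_sets M"
    by (intro null_sets_UN null) simp
  finally show ?thesis
    by (simp add: emeasure_eq_measure null_sets_def)
qed

lemma AE_le_right_endpoint:
  assumes "right_endpoint M Y = ereal c" and "Y \<in> borel_measurable M"
  shows "AE w in M. Y w \<le> c"
proof -
  have "{w \<in> space M. Y w > c} \<in> null_sets M"
    using prob_gt_right_endpoint[OF assms] assms(2)
    by (simp add: emeasure_eq_measure null_sets_def)
  then show ?thesis
    by (rule AE_I') auto
qed

lemma prob_gt_below_right_endpoint:
  assumes "right_endpoint M Y = ereal c" and "x < c" and [measurable]: "Y \<in> borel_measurable M"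
  shows "prob {w \<in> space M. Y w > x} > 0"
proof -
  have "ereal x < (SUP x \<in> {x. prob {w \<in> space M. Y w \<le> x} < 1}. ereal x)"
    using assms by (simp add: right_endpoint_def)
  then obtain x' where x': "prob {w \<in> space M. Y w \<le> x'} < 1" "x < x'"
    by (auto simp: less_SUP_iff)
  have "prob {w \<in> space M. Y w \<le> x} \<le> prob {w \<in> space M. Y w \<le> x'}"
    using x'(2) by (intro finite_measure_mono) auto
  moreover have "{w \<in> space M. Y w > x} = space M - {w \<in> space M. Y w \<le> x}"
    by auto
  ultimately show ?thesis
    using x'(1) by (simp add: prob_compl)
qed

lemma prob_product_gt:
  fixes X Y :: "'a \<Rightarrow> real"
  assumes [measurable]: "X \<in> borel_measurable M" "Y \<in> borel_measurable M"
    and indep: "indep_var borel X borel Y" and Y_pos: "\<And>w. w \<in> space M \<Longrightarrow> Y w > 0"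
  shows "prob {w \<in> space M. X w * Y w > v} = expectation (\<lambda>w. prob {x \<in> space M. X x > v / Y w})"
proof -
  let ?PX = "distr M borel X" and ?PY = "distr M borel Y"
  let ?tail = "\<lambda>s. prob {x \<in> space M. X x > s}"
  interpret PX: prob_space ?PX by (rule prob_space_distr) simp
  interpret PY: prob_space ?PY by (rule prob_space_distr) simp
  interpret pair_sigma_finite ?PX ?PY ..
  define S where "S = {z :: real \<times> real. fst z * snd z > v}"
  have S_sets[measurable]: "S \<in> sets (borel \<Otimes>\<^sub>M borel)"
  proof -
    have "S = {z \<in> space (borel \<Otimes>\<^sub>M borel). v < fst z * snd z}"
      by (auto simp: S_def space_pair_measure)
    also have "\<dots> \<in> sets (borel \<Otimes>\<^sub>M borel)"
      by measurable
    finally show ?thesis .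
  qed
  have tail_section: "(\<integral>\<^sup>+ x. indicator S (x, Y w) \<partial>?PX) = ennreal (?tail (v / Y w))"
    if w: "w \<in> space M" for w
  proof -
    have sets: "{x. v < x * Y w} \<in> sets ?PX"
    proof -
      have "{x \<in> space borel. v < x * Y w} \<in> sets borel" by measurable
      then show ?thesis by simp
    qed
    have "(\<integral>\<^sup>+ x. indicator S (x, Y w) \<partial>?PX) = (\<integral>\<^sup>+ x. indicator {x. v < x * Y w} x \<partial>?PX)"
      by (rule nn_integral_cong) (simp add: S_def indicator_def)
    also have "\<dots> = emeasure ?PX {x. v < x * Y w}"
      by (rule nn_integral_indicator[OF sets])
    also have "\<dots> = emeasure M {x \<in> space M. X x > v / Y w}"
      using Y_pos[OF w] by (subst emeasure_distr) (auto intro!: arg_cong[where f="emeasure M"] simp: field_simps)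
    finally show ?thesis
      by (simp add: emeasure_eq_measure)
  qed
  have "?PX \<Otimes>\<^sub>M ?PY = distr M (borel \<Otimes>\<^sub>M borel) (\<lambda>w. (X w, Y w))"
    using indep indep_var_distribution_eq by blast
  then have "emeasure M {w \<in> space M. X w * Y w > v} = emeasure (?PX \<Otimes>\<^sub>M ?PY) S"
    by (simp only:, subst emeasure_distr[OF _ S_sets]) (auto simp: S_def intro!: arg_cong[where f="emeasure M"])
  also have "\<dots> = (\<integral>\<^sup>+ y. (\<integral>\<^sup>+ x. indicator S (x, y) \<partial>?PX) \<partial>?PY)"
    by (subst nn_integral_indicator[symmetric]) (simp_all add: nn_integral_snd)
  also have "\<dots> = (\<integral>\<^sup>+ w. ennreal (?tail (v / Y w)) \<partial>M)"
    by (subst nn_integral_distr) (auto intro!: nn_integral_cong simp: tail_section)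
  also have "\<dots> = ennreal (expectation (\<lambda>w. ?tail (v / Y w)))"
    by (rule nn_integral_eq_integral) (auto intro!: integrable_const_bound[where B=1])
  finally show ?thesis
    by (simp add: emeasure_eq_measure integral_nonneg_AE)
qed

end

section \<open>Tails in the Gumbel domain with a regularly varying scale\<close>

locale gumbel_tail = prob_space M for M :: "'s measure" +
  fixes X :: "'s \<Rightarrow> real" and a :: "real \<Rightarrow> real" and \<tau> :: real
  assumes X_measurable[measurable]: "X \<in> borel_measurable M"
    and tail_pos: "prob {w \<in> space M. X w > u} > 0"
    and scale_pos: "a u > 0"
    and index_ge: "\<tau> \<ge> -1"
    and scale_regvar: "regularly_varying a (- \<tau>)"
    and gmda: "GMDA M X a"
begin

definition tail :: "real \<Rightarrow> real" where
  "tail u = prob {w \<in> space M. X w > u}"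

lemma tail_gt_0: "tail u > 0"
  using tail_pos by (simp add: tail_def)

lemma tail_le_1: "tail u \<le> 1"
  by (simp add: tail_def)

lemma tail_antimono: "u \<le> v \<Longrightarrow> tail v \<le> tail u"
  unfolding tail_def by (intro finite_measure_mono) auto

lemma borel_measurable_tail[measurable]: "tail \<in> borel_measurable borel"
proof -
  have "mono (\<lambda>u. - tail u)"
    by (auto simp: mono_def tail_antimono)
  then have "(\<lambda>u. - (- tail u)) \<in> borel_measurable borel"
    using borel_measurable_mono borel_measurable_uminus by blast
  then show ?thesis by simp
qed

lemma tail_shift_bounds:
  assumes "t \<ge> 0" "\<eta> > 0"
  shows "\<exists>U. \<forall>u\<ge>U. (exp (-t) - \<eta>) * tail u < tail (u + a u * t)
    \<and> tail (u + a u * t) < (exp (-t) + \<eta>) * tail u"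
proof -
  have "((\<lambda>u. tail (u + a u * t) / tail u) \<longlongrightarrow> exp (-t)) at_top"
    using gmda assms unfolding GMDA_def tail_def by auto
  then have "\<forall>\<^sub>F u in at_top. dist (tail (u + a u * t) / tail u) (exp (-t)) < \<eta>"
    using assms by (intro tendstoD) auto
  then obtain U where U: "\<forall>u\<ge>U. \<bar>tail (u + a u * t) / tail u - exp (-t)\<bar> < \<eta>"
    by (auto simp: eventually_at_top_linorder dist_real_def)
  show ?thesis
  proof (intro exI[of _ U] allI impI)
    fix u assume "U \<le> u"
    then have "exp (-t) - \<eta> < tail (u + a u * t) / tail u" "tail (u + a u * t) / tail u < exp (-t) + \<eta>"
      using U by (auto simp: abs_less_iff)
    then show "(exp (-t) - \<eta>) * tail u < tail (u + a u * t) \<and> tail (u + a u * t) < (exp (-t) + \<eta>) * tail u"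
      using tail_gt_0[of u] by (simp add: divide_less_eq less_divide_eq)
  qed
qed

text \<open>\<open>near_scale \<delta> w T\<close> pins \<open>T\<close> to \<open>a w\<close> up to a factor close to \<open>1\<close>. Unlike \<open>a\<close>, which need
  not be measurable, it is a Borel condition in \<open>(w, T)\<close>, because \<open>tail\<close> is monotone.\<close>
definition near_scale :: "real \<Rightarrow> real \<Rightarrow> real \<Rightarrow> bool" where
  "near_scale \<delta> w T \<longleftrightarrow> exp (-1-\<delta>) * tail w < tail (w + T) \<and> tail (w + T) < exp (-1+\<delta>) * tail w"

lemma near_scale_imp_scale_bounds:
  assumes "0 < \<delta>" "\<delta> < 1/4"
  shows "\<exists>W. \<forall>w\<ge>W. \<forall>T. near_scale \<delta> w T \<longrightarrow> T < a w * (1 + 2*\<delta>) \<and> a w * (1 - 2*\<delta>) < T"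
proof -
  obtain W1 where W1: "\<forall>u\<ge>W1. tail (u + a u * (1+2*\<delta>)) < exp (-1-\<delta>) * tail u"
    using tail_shift_bounds[of "1+2*\<delta>" "exp (-1-\<delta>) - exp (-(1+2*\<delta>))"] assms by auto
  obtain W2 where W2: "\<forall>u\<ge>W2. exp (-1+\<delta>) * tail u < tail (u + a u * (1-2*\<delta>))"
    using tail_shift_bounds[of "1-2*\<delta>" "exp (-(1-2*\<delta>)) - exp (-1+\<delta>)"] assms by auto
  show ?thesis
  proof (intro exI[of _ "max W1 W2"] allI impI conjI)
    fix w T assume w: "max W1 W2 \<le> w" and near: "near_scale \<delta> w T"
    show "T < a w * (1 + 2*\<delta>)"
    proof (rule ccontr)
      assume "\<not> ?thesis"
      then have "tail (w + T) \<le> tail (w + a w * (1+2*\<delta>))"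
        by (intro tail_antimono) simp
      with W1 w near show False by (auto simp: near_scale_def)
    qed
    show "a w * (1 - 2*\<delta>) < T"
    proof (rule ccontr)
      assume "\<not> ?thesis"
      then have "tail (w + a w * (1-2*\<delta>)) \<le> tail (w + T)"
        by (intro tail_antimono) simp
      with W2 w near show False by (auto simp: near_scale_def)
    qed
  qed
qed

lemma scale_bounds_imp_near_scale:
  assumes "0 < \<delta>" "\<delta> < 1"
  shows "\<exists>W. \<forall>w\<ge>W. \<forall>T. a w * (1 - \<delta>/2) \<le> T \<and> T \<le> a w * (1 + \<delta>/2) \<longrightarrow> near_scale \<delta> w T"
proof -
  obtain W1 where W1: "\<forall>u\<ge>W1. exp (-1-\<delta>) * tail u < tail (u + a u * (1+\<delta>/2))"
    using tail_shift_bounds[of "1+\<delta>/2" "exp (-(1+\<delta>/2)) - exp (-1-\<delta>)"] assms by auto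
  obtain W2 where W2: "\<forall>u\<ge>W2. tail (u + a u * (1-\<delta>/2)) < exp (-1+\<delta>) * tail u"
    using tail_shift_bounds[of "1-\<delta>/2" "exp (-1+\<delta>) - exp (-(1-\<delta>/2))"] assms by auto
  show ?thesis
  proof (intro exI[of _ "max W1 W2"] allI impI)
    fix w T assume w: "max W1 W2 \<le> w" and T: "a w * (1 - \<delta>/2) \<le> T \<and> T \<le> a w * (1 + \<delta>/2)"
    have "tail (w + a w * (1+\<delta>/2)) \<le> tail (w + T)" and "tail (w + T) \<le> tail (w + a w * (1-\<delta>/2))"
      using T by (auto intro: tail_antimono)
    with W1 W2 w show "near_scale \<delta> w T"
      unfolding near_scale_def by (meson max.bounded_iff order_less_le_trans order_le_less_trans)
  qed
qed

definition near_scale_set :: "real \<Rightarrow> (nat \<Rightarrow> real) \<Rightarrow> nat \<Rightarrow> real set" where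
  "near_scale_set \<delta> s m = {z. \<forall>n\<ge>m. near_scale \<delta> (exp z * s n) (exp (-\<tau>*z) * a (s n))}"

lemma near_scale_set_borel: "near_scale_set \<delta> s m \<in> sets borel"
proof -
  have "near_scale_set \<delta> s m = {z \<in> space borel. \<forall>n. m \<le> n \<longrightarrow> near_scale \<delta> (exp z * s n) (exp (-\<tau>*z) * a (s n))}"
    by (simp add: near_scale_set_def)
  also have "\<dots> \<in> sets borel"
    unfolding near_scale_def by measurable
  finally show ?thesis .
qed

lemma incseq_near_scale_set: "incseq (\<lambda>m. I \<inter> near_scale_set \<delta> s m)"
  by (auto simp: incseq_def near_scale_set_def)

lemma in_near_scale_set:
  assumes s: "filterlim s at_top sequentially" and "z \<ge> 0" "0 < \<delta>" "\<delta> < 1"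
  shows "\<exists>m. z \<in> near_scale_set \<delta> s m"
proof -
  obtain W where W: "\<forall>w\<ge>W. \<forall>T. a w * (1 - \<delta>/2) \<le> T \<and> T \<le> a w * (1 + \<delta>/2) \<longrightarrow> near_scale \<delta> w T"
    using scale_bounds_imp_near_scale assms by blast
  define c where "c = exp (-\<tau>*z)"
  have "c > 0" by (simp add: c_def)
  have "((\<lambda>u. a (u * exp z) / a u) \<longlongrightarrow> exp z powr (-\<tau>)) at_top"
    using scale_regvar by (simp add: regularly_varying_def)
  then have "((\<lambda>u. a (u * exp z) / a u) \<longlongrightarrow> c) at_top"
    by (simp add: c_def powr_def)
  then have lim: "((\<lambda>n. a (s n * exp z) / a (s n)) \<longlongrightarrow> c) sequentially"
    using s by (rule filterlim_compose)
  have "\<forall>\<^sub>F n in sequentially. c / (1+\<delta>/2) < a (s n * exp z) / a (s n)"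
    using \<open>c > 0\<close> assms by (intro order_tendstoD(1)[OF lim]) (simp add: divide_less_eq)
  moreover have "\<forall>\<^sub>F n in sequentially. a (s n * exp z) / a (s n) < c / (1-\<delta>/2)"
    using \<open>c > 0\<close> assms by (intro order_tendstoD(2)[OF lim]) (simp add: less_divide_eq)
  moreover have "\<forall>\<^sub>F n in sequentially. s n \<ge> max W 0"
    using s filterlim_at_top by blast
  ultimately have "\<forall>\<^sub>F n in sequentially. c / (1+\<delta>/2) < a (s n * exp z) / a (s n)
      \<and> a (s n * exp z) / a (s n) < c / (1-\<delta>/2) \<and> s n \<ge> max W 0"
    by eventually_elim auto
  then obtain m where m: "\<forall>n\<ge>m. c / (1+\<delta>/2) < a (s n * exp z) / a (s n)
      \<and> a (s n * exp z) / a (s n) < c / (1-\<delta>/2) \<and> s n \<ge> max W 0"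
    by (auto simp: eventually_sequentially)
  have "near_scale \<delta> (exp z * s n) (c * a (s n))" if "m \<le> n" for n
  proof -
    have "exp z * s n \<ge> s n" and "s n \<ge> W"
      using m that \<open>z \<ge> 0\<close> by (auto simp: mult_le_cancel_right1)
    moreover have "a (exp z * s n) * (1 - \<delta>/2) \<le> c * a (s n)" "c * a (s n) \<le> a (exp z * s n) * (1 + \<delta>/2)"
      using m that scale_pos[of "s n"] assms
      by (auto simp: divide_less_eq less_divide_eq mult.commute)
    ultimately show ?thesis
      using W by auto
  qed
  then show ?thesis
    by (auto simp: near_scale_set_def c_def)
qed

lemma UN_near_scale_set:
  assumes s: "filterlim s at_top sequentially" and "I \<subseteq> {0..}" "0 < \<delta>" "\<delta> < 1"
  shows "(\<Union>m. I \<inter> near_scale_set \<delta> s m) = I"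
proof (intro equalityI subsetI)
  fix z assume "z \<in> I"
  then obtain m where "z \<in> near_scale_set \<delta> s m"
    using in_near_scale_set[OF s] assms by force
  with \<open>z \<in> I\<close> show "z \<in> (\<Union>m. I \<inter> near_scale_set \<delta> s m)"
    by blast
qed auto

lemma uniform_regvar_le_1:
  assumes \<epsilon>: "0 < \<epsilon>" "\<epsilon> \<le> 1"
  shows "\<exists>U. \<forall>u\<ge>U. \<forall>h\<in>{0..1}.
    a (exp h * u) \<le> (1+\<epsilon>) * exp (-\<tau>*h) * a u \<and> (1-\<epsilon>) * exp (-\<tau>*h) * a u \<le> a (exp h * u)"
proof (rule ccontr)
  assume "\<not> ?thesis"
  then have "\<forall>n::nat. \<exists>u h. u \<ge> real n \<and> h \<in> {0..1} \<and>
    \<not> (a (exp h * u) \<le> (1+\<epsilon>) * exp (-\<tau>*h) * a u \<and> (1-\<epsilon>) * exp (-\<tau>*h) * a u \<le> a (exp h * u))"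
    by blast
  then obtain u h where u: "\<And>n. u n \<ge> real n" and h: "\<And>n. h n \<in> {0..1}"
    and bad: "\<And>n. \<not> (a (exp (h n) * u n) \<le> (1+\<epsilon>) * exp (-\<tau>*h n) * a (u n)
      \<and> (1-\<epsilon>) * exp (-\<tau>*h n) * a (u n) \<le> a (exp (h n) * u n))"
    by metis
  define \<delta> where "\<delta> = \<epsilon>/8"
  have \<delta>: "0 < \<delta>" "\<delta> < 1/4"
    using \<epsilon> by (auto simp: \<delta>_def)
  define v where "v n = exp (h n) * u n" for n
  have u_nonneg: "u n \<ge> 0" for n
    using u[of n] of_nat_0_le_iff order_trans by blast
  have u_top: "filterlim u at_top sequentially"
    by (rule filterlim_at_top_mono[OF filterlim_real_sequentially]) (use u in auto)
  have "u n \<le> v n" for n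
    using h[of n] u_nonneg[of n] by (simp add: v_def mult_le_cancel_right1)
  then have v_top: "filterlim v at_top sequentially"
    by (intro filterlim_at_top_mono[OF u_top] always_eventually) auto
  have "\<exists>m. \<forall>h\<in>{0..1}. \<exists>z\<in>{0..2} \<inter> near_scale_set \<delta> u m. z - h \<in> {0..1} \<inter> near_scale_set \<delta> v m"
    using UN_near_scale_set[OF u_top, of "{0..2}"] UN_near_scale_set[OF v_top, of "{0..1}"] \<delta>
    by (intro incseq_translate_overlap) (auto simp: incseq_near_scale_set near_scale_set_borel)
  then obtain m where m: "\<forall>h\<in>{0..1}. \<exists>z\<in>{0..2} \<inter> near_scale_set \<delta> u m. z - h \<in> {0..1} \<inter> near_scale_set \<delta> v m"
    by blast
  obtain W where W: "\<forall>w\<ge>W. \<forall>T. near_scale \<delta> w T \<longrightarrow> T < a w * (1 + \<epsilon>/4) \<and> a w * (1 - \<epsilon>/4) < T"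
    using near_scale_imp_scale_bounds[OF \<delta>] by (auto simp: \<delta>_def)
  define n where "n = max m (nat \<lceil>W\<rceil>)"
  obtain z where z: "z \<in> {0..2} \<inter> near_scale_set \<delta> u m" "z - h n \<in> {0..1} \<inter> near_scale_set \<delta> v m"
    using m h by blast
  define w where "w = exp z * u n"
  have "W \<le> u n"
    using u[of n] by (simp add: n_def) linarith
  also have "u n \<le> w"
    using z u_nonneg[of n] by (simp add: w_def mult_le_cancel_right1)
  finally have "W \<le> w" .
  define k where "k = exp (-\<tau>*(z - h n))"
  have "exp (-\<tau>*z) = k * exp (-\<tau>*h n)"
    by (simp add: k_def algebra_simps flip: exp_add)
  then have "near_scale \<delta> w (k * (exp (-\<tau>*h n) * a (u n)))"
    using z by (simp add: near_scale_set_def n_def w_def mult.assoc)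
  moreover have "exp (z - h n) * v n = w"
    by (simp add: v_def w_def exp_diff)
  then have "near_scale \<delta> w (k * a (v n))"
    using z by (auto simp: near_scale_set_def n_def k_def)
  ultimately have "a (v n) \<le> (1+\<epsilon>) * (exp (-\<tau>*h n) * a (u n))"
    and "(1-\<epsilon>) * (exp (-\<tau>*h n) * a (u n)) \<le> a (v n)"
    using W \<open>W \<le> w\<close> \<epsilon> scale_pos[of w] scale_pos[of "v n"]
    by (auto intro!: ratio_bounds_of_common_approx[where x = "a w" and k = k] simp: k_def)
  then show False
    using bad[of n] by (simp add: v_def mult.assoc)
qed

lemma uniform_regvar:
  assumes "0 < \<epsilon>"
  shows "\<exists>U. \<forall>u\<ge>U. \<forall>h\<in>{0..1}.
    a (exp h * u) \<le> (1+\<epsilon>) * exp (-\<tau>*h) * a u \<and> (1-\<epsilon>) * exp (-\<tau>*h) * a u \<le> a (exp h * u)"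
proof -
  obtain U where U: "\<forall>u\<ge>U. \<forall>h\<in>{0..1}. a (exp h * u) \<le> (1 + min \<epsilon> 1) * exp (-\<tau>*h) * a u
      \<and> (1 - min \<epsilon> 1) * exp (-\<tau>*h) * a u \<le> a (exp h * u)"
    using uniform_regvar_le_1[of "min \<epsilon> 1"] assms by auto
  show ?thesis
  proof (intro exI[of _ U] allI impI ballI conjI)
    fix u h assume "U \<le> u" and "h \<in> {0..1::real}"
    then have le: "a (exp h * u) \<le> (1 + min \<epsilon> 1) * (exp (-\<tau>*h) * a u)"
      and ge: "(1 - min \<epsilon> 1) * (exp (-\<tau>*h) * a u) \<le> a (exp h * u)"
      using U by (auto simp only: mult.assoc)
    have "exp (-\<tau>*h) * a u > 0"
      using scale_pos by simp
    then have "(1 + min \<epsilon> 1) * (exp (-\<tau>*h) * a u) \<le> (1+\<epsilon>) * (exp (-\<tau>*h) * a u)"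
      and "(1-\<epsilon>) * (exp (-\<tau>*h) * a u) \<le> (1 - min \<epsilon> 1) * (exp (-\<tau>*h) * a u)"
      by (simp_all add: mult_right_mono)
    with le ge show "a (exp h * u) \<le> (1+\<epsilon>) * exp (-\<tau>*h) * a u"
      and "(1-\<epsilon>) * exp (-\<tau>*h) * a u \<le> a (exp h * u)"
      by (simp_all only: mult.assoc)
  qed
qed

text \<open>Two consecutive shifts lower the tail by about \<open>e\<^sup>-\<^sup>p e\<^sup>-\<^sup>1\<close>, which is more than the
  factor \<open>e\<^sup>-\<^sup>q\<close> of the single shift by \<open>a(u) q\<close>.\<close>
lemma shift_after_shift_bound:
  assumes "0 \<le> p" "1 + p < q"
  shows "\<exists>U. \<forall>u\<ge>U. \<forall>x. u \<le> x \<and> x \<le> u + a u * p \<longrightarrow> x + a x < u + a u * q"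
proof -
  define \<eta> where "\<eta> = (exp (-1) * exp (-p) - exp (-q)) / 4"
  have "exp (-q) < exp (-1) * exp (-p)"
    using assms(2) by (simp flip: exp_add)
  then have "\<eta> > 0"
    by (simp add: \<eta>_def)
  obtain U1 where U1: "\<forall>u\<ge>U1. (exp (-p) - \<eta>) * tail u < tail (u + a u * p)"
    using tail_shift_bounds[of p \<eta>] assms \<open>\<eta> > 0\<close> by auto
  obtain U2 where U2: "\<forall>u\<ge>U2. (exp (-1) - \<eta>) * tail u < tail (u + a u * 1)"
    using tail_shift_bounds[of 1 \<eta>] \<open>\<eta> > 0\<close> by auto
  obtain U3 where U3: "\<forall>u\<ge>U3. tail (u + a u * q) < (exp (-q) + \<eta>) * tail u"
    using tail_shift_bounds[of q \<eta>] assms \<open>\<eta> > 0\<close> by auto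
  show ?thesis
  proof (intro exI[of _ "max U1 (max U2 U3)"] allI impI)
    fix u x assume u: "max U1 (max U2 U3) \<le> u" and x: "u \<le> x \<and> x \<le> u + a u * p"
    show "x + a x < u + a u * q"
    proof (rule ccontr)
      assume "\<not> ?thesis"
      then have "tail (x + a x) \<le> tail (u + a u * q)"
        by (intro tail_antimono) simp
      moreover have "tail (u + a u * p) \<le> tail x"
        using x by (intro tail_antimono) simp
      ultimately show False
        using U1 U2 U3 u x tail_gt_0[of u] assms \<open>exp (-q) < exp (-1) * exp (-p)\<close>
        by (intro ratio_chain_absurd[of "exp (-1)" "exp (-p)" "exp (-q)" \<eta> "tail u" "tail x" "tail (x + a x)"])
           (auto simp: \<eta>_def)
    qed
  qed
qed

lemma scale_lt_linear_index_minus_one: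
  assumes "\<tau> = -1"
  shows "\<exists>U. \<forall>u\<ge>U. a u < 2 * exp 1 * u"
proof -
  define q where "q = 7/8 * exp (1::real)"
  have "exp (1::real) \<ge> 2"
    using exp_ge_add_one_self[of 1] by simp
  then have "1 + 1/2 < q"
    by (simp add: q_def)
  then obtain U1 where U1: "\<forall>u\<ge>U1. \<forall>x. u \<le> x \<and> x \<le> u + a u * (1/2) \<longrightarrow> x + a x < u + a u * q"
    using shift_after_shift_bound[of "1/2" q] by auto
  obtain U2 where U2: "\<forall>u\<ge>U2. (1 - 1/8) * exp (-\<tau>*1) * a u \<le> a (exp 1 * u)"
    using uniform_regvar[of "1/8"] by fastforce
  show ?thesis
  proof (intro exI[of _ "max 0 (max U1 U2)"] allI impI)
    fix u assume u: "max 0 (max U1 U2) \<le> u"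
    show "a u < 2 * exp 1 * u"
    proof (rule ccontr)
      assume "\<not> ?thesis"
      then have "u \<le> exp 1 * u \<and> exp 1 * u \<le> u + a u * (1/2)"
        using u by (auto simp: mult_le_cancel_right1)
      moreover have "a u * q \<le> a (exp 1 * u)"
        using U2 u \<open>\<tau> = -1\<close> by (auto simp: q_def mult.commute)
      ultimately show False
        using U1 u by fastforce
    qed
  qed
qed

lemma scale_o_linear_index_minus_one:
  assumes "\<tau> = -1" "0 < \<delta>" "\<delta> \<le> 1"
  shows "\<exists>U. \<forall>u\<ge>U. a u < \<delta> * u"
proof -
  define R where "R = 2 * exp (1::real)"
  define s where "s = 1 / R"
  define \<theta> where "\<theta> = \<delta> * s / 2"
  have "R \<ge> 4"
    using exp_ge_add_one_self[of 1] by (simp add: R_def)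
  then have s: "0 < s" "s \<le> 1/4" and \<theta>: "0 < \<theta>" "\<theta> \<le> 1/8"
    using assms(2,3) by (auto simp: s_def \<theta>_def field_simps)
  obtain U1 where U1: "\<forall>u\<ge>U1. a u < R * u"
    using scale_lt_linear_index_minus_one[OF assms(1)] by (auto simp: R_def)
  obtain U2 where U2: "\<forall>u\<ge>U2. \<forall>x. u \<le> x \<and> x \<le> u + a u * s \<longrightarrow> x + a x < u + a u * (s + 1 + \<theta>)"
    using shift_after_shift_bound[of s "s + 1 + \<theta>"] s \<theta> by auto
  obtain U3 where U3: "\<forall>u\<ge>U3. \<forall>h\<in>{0..1}. (1 - \<theta>/2) * exp (-\<tau>*h) * a u \<le> a (exp h * u)"
    using uniform_regvar[of "\<theta>/2"] \<theta> by auto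
  show ?thesis
  proof (intro exI[of _ "max 1 (max U1 (max U2 U3))"] allI impI)
    fix u assume u: "max 1 (max U1 (max U2 U3)) \<le> u"
    then have "u > 0" by simp
    show "a u < \<delta> * u"
    proof (rule ccontr)
      assume "\<not> a u < \<delta> * u"
      define w where "w = u + a u * s"
      have "a u < R * u"
        using U1 u by auto
      then have "a u * s < u"
        using \<open>R \<ge> 4\<close> by (simp add: s_def divide_less_eq mult.commute)
      then have w_u: "1 \<le> w / u" "w / u \<le> 2"
        using \<open>u > 0\<close> s scale_pos[of u] by (simp_all add: w_def field_simps)
      define h where "h = ln (w / u)"
      have "exp h * u = w"
        using w_u \<open>u > 0\<close> by (simp add: h_def)
      have "0 \<le> h" "h \<le> 1"
        using w_u ln_le_minus_one[of "w / u"] by (simp_all add: h_def)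
      then have "(1 - \<theta>/2) * exp (-\<tau>*h) * a u \<le> a (exp h * u)"
        using U3 u by auto
      moreover have "exp (-\<tau>*h) = w / u"
        using w_u assms(1) by (simp add: h_def)
      ultimately have "(1 - \<theta>/2) * (w / u) * a u \<le> a w"
        by (simp only: \<open>exp h * u = w\<close>)
      moreover have "1 + 2*\<theta> \<le> w / u"
        using \<open>\<not> a u < \<delta> * u\<close> \<open>u > 0\<close> s by (simp add: w_def \<theta>_def field_simps)
      then have "(1 - \<theta>/2) * (1 + 2*\<theta>) * a u \<le> (1 - \<theta>/2) * (w / u) * a u"
        using \<theta> scale_pos[of u] by (intro mult_right_mono mult_left_mono) auto
      moreover have "(1 + \<theta>) * a u \<le> (1 - \<theta>/2) * (1 + 2*\<theta>) * a u"
        using \<theta> scale_pos[of u] by (intro mult_right_mono) (auto simp: algebra_simps power2_eq_square)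
      ultimately have "u + a u * (s + 1 + \<theta>) \<le> w + a w"
        by (simp add: w_def algebra_simps)
      moreover have "u \<le> w \<and> w \<le> u + a u * s"
        using s scale_pos[of u] by (simp add: w_def)
      ultimately show False
        using U2 u by force
    qed
  qed
qed

lemma scale_o_linear_index_gt_minus_one:
  assumes "\<tau> > -1" "0 < \<delta>"
  shows "\<exists>U. \<forall>u\<ge>U. a u \<le> \<delta> * u"
proof -
  define \<epsilon> where "\<epsilon> = (exp (1+\<tau>) - 1) / 2"
  have "exp (1+\<tau>) > 1"
    using assms(1) by simp
  then have "\<epsilon> > 0" and "1 + \<epsilon> < exp (1+\<tau>)"
    by (simp_all add: \<epsilon>_def field_simps)
  define \<rho> where "\<rho> = (1+\<epsilon>) * exp (-(1+\<tau>))"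
  have "\<rho> = (1+\<epsilon>) / exp (1+\<tau>)"
    by (simp only: \<rho>_def exp_minus divide_inverse)
  then have "0 \<le> \<rho>" "\<rho> < 1"
    using \<open>\<epsilon> > 0\<close> \<open>1 + \<epsilon> < exp (1+\<tau>)\<close> by simp_all
  obtain U0 where U0: "\<forall>u\<ge>U0. \<forall>h\<in>{0..1}. a (exp h * u) \<le> (1+\<epsilon>) * exp (-\<tau>*h) * a u"
    using uniform_regvar[OF \<open>\<epsilon> > 0\<close>] by fastforce
  define U where "U = max U0 1"
  have ratio_step: "a (exp h * u) / (exp h * u) \<le> (1+\<epsilon>) * exp (-(1+\<tau>)*h) * (a u / u)"
    if "u \<ge> U" "h \<in> {0..1}" for u h
  proof -
    have "a (exp h * u) / (exp h * u) \<le> (1+\<epsilon>) * exp (-\<tau>*h) * a u / (exp h * u)"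
      using U0 that by (intro divide_right_mono) (auto simp: U_def)
    also have "\<dots> = (1+\<epsilon>) * (exp (-\<tau>*h) / exp h) * (a u / u)"
      by simp
    also have "exp (-\<tau>*h) / exp h = exp (-(1+\<tau>)*h)"
      by (simp add: algebra_simps flip: exp_diff)
    finally show ?thesis .
  qed
  have "\<exists>V. \<forall>u\<ge>V. a u / u \<le> \<delta>"
  proof (rule eventually_le_of_geometric_decay[where C = "(1+\<epsilon>) * (a U / U)"])
    show "U > 0" "0 \<le> \<rho>" "\<rho> < 1" "\<delta> > 0"
      using \<open>0 \<le> \<rho>\<close> \<open>\<rho> < 1\<close> assms(2) by (simp_all add: U_def)
    show "a (exp h * U) / (exp h * U) \<le> (1+\<epsilon>) * (a U / U)" if "h \<in> {0..1}" for h
    proof -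
      have "0 \<le> (1+\<tau>)*h"
        using that assms(1) by simp
      then have "exp (-(1+\<tau>)*h) \<le> 1"
        by (simp only: mult_minus_left neg_le_0_iff_le exp_le_one_iff)
      moreover have "0 \<le> (1+\<epsilon>) * (a U / U)"
        using \<open>\<epsilon> > 0\<close> scale_pos[of U] by (simp add: U_def)
      ultimately have "(1+\<epsilon>) * exp (-(1+\<tau>)*h) * (a U / U) \<le> (1+\<epsilon>) * (a U / U)"
        using mult_left_mono by (fastforce simp: mult_ac)
      then show ?thesis
        using ratio_step[of U h] that by simp
    qed
    show "a (exp 1 * u) / (exp 1 * u) \<le> \<rho> * (a u / u)" if "u \<ge> U" for u
      using ratio_step[of u 1] that by (simp add: \<rho>_def)
  qed
  then obtain V where V: "\<forall>u\<ge>V. a u / u \<le> \<delta>"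
    by blast
  show ?thesis
    by (rule exI[of _ "max V 1"]) (use V in \<open>auto simp: divide_le_eq\<close>)
qed

lemma scale_o_linear:
  assumes "0 < \<delta>"
  shows "\<exists>U. \<forall>u\<ge>U. a u \<le> \<delta> * u"
proof (cases "\<tau> = -1")
  case True
  obtain U where U: "\<forall>u\<ge>U. a u < min \<delta> 1 * u"
    using scale_o_linear_index_minus_one[OF True, of "min \<delta> 1"] assms by auto
  show ?thesis
  proof (intro exI[of _ "max U 0"] allI impI)
    fix u assume u: "max U 0 \<le> u"
    then have "a u < min \<delta> 1 * u"
      using U by auto
    also have "\<dots> \<le> \<delta> * u"
      using u by (intro mult_right_mono) auto
    finally show "a u \<le> \<delta> * u" by simp
  qed
next
  case False
  then show ?thesis
    using index_ge scale_o_linear_index_gt_minus_one assms by simp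
qed

lemma tail_rapid_decay:
  assumes "c > 1" "\<epsilon> > 0"
  shows "\<exists>U. \<forall>u\<ge>U. tail (c * u) \<le> \<epsilon> * tail u"
proof -
  define t where "t = 2 / \<epsilon>"
  have "t > 0"
    using assms by (simp add: t_def)
  have "t \<le> exp t"
    using exp_ge_add_one_self[of t] by linarith
  then have "exp (-t) \<le> 1 / t"
    using \<open>t > 0\<close> by (simp add: exp_minus field_simps)
  then have "exp (-t) \<le> \<epsilon> / 2"
    by (simp add: t_def)
  obtain U1 where U1: "\<forall>u\<ge>U1. tail (u + a u * t) < (exp (-t) + \<epsilon>/2) * tail u"
    using tail_shift_bounds[of t "\<epsilon>/2"] \<open>t > 0\<close> assms by auto
  obtain U2 where U2: "\<forall>u\<ge>U2. a u \<le> ((c - 1) / t) * u"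
    using scale_o_linear[of "(c - 1) / t"] assms \<open>t > 0\<close> by auto
  show ?thesis
  proof (intro exI[of _ "max U1 U2"] allI impI)
    fix u assume u: "max U1 U2 \<le> u"
    then have "u + a u * t \<le> c * u"
      using U2 \<open>t > 0\<close> by (auto simp: field_simps)
    then have "tail (c * u) \<le> tail (u + a u * t)"
      by (rule tail_antimono)
    also have "\<dots> < (exp (-t) + \<epsilon>/2) * tail u"
      using U1 u by auto
    also have "\<dots> \<le> \<epsilon> * tail u"
      using \<open>exp (-t) \<le> \<epsilon> / 2\<close> tail_gt_0[of u] by (intro mult_right_mono) auto
    finally show "tail (c * u) \<le> \<epsilon> * tail u" by simp
  qed
qed

lemma tail_shift_div_upper:
  assumes "t \<ge> 0" "\<epsilon> > 0"
  shows "\<exists>U. \<forall>u\<ge>U. \<forall>y\<in>{0<..1}. tail ((u + a u * t) / y) \<le> (exp (-t) + \<epsilon>) * tail (u / y) + tail (2 * u)"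
proof -
  define \<kappa> where "\<kappa> = \<epsilon> / (2 * (t + 1))"
  define s where "s = t / (1 + \<kappa>)"
  have "\<kappa> > 0"
    using assms by (simp add: \<kappa>_def)
  have "0 \<le> s" "s \<le> t"
    using assms \<open>\<kappa> > 0\<close> by (auto simp: s_def field_simps)
  have "t - s = t * \<kappa> / (1 + \<kappa>)"
    using \<open>\<kappa> > 0\<close> by (simp add: s_def field_simps)
  also have "\<dots> \<le> t * \<kappa>"
    using assms \<open>\<kappa> > 0\<close> by (simp add: divide_le_eq mult_le_cancel_left1 not_less)
  also have "\<dots> \<le> \<epsilon> / 2"
    using assms by (simp add: \<kappa>_def field_simps)
  finally have "exp (-s) \<le> exp (-t) + \<epsilon> / 2"
    using exp_minus_diff_le[OF \<open>0 \<le> s\<close> \<open>s \<le> t\<close>] by linarith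
  obtain U1 where U1: "\<forall>u\<ge>U1. \<forall>h\<in>{0..1}. a (exp h * u) \<le> (1+\<kappa>) * exp (-\<tau>*h) * a u"
    using uniform_regvar[OF \<open>\<kappa> > 0\<close>] by fastforce
  obtain U2 where U2: "\<forall>v\<ge>U2. tail (v + a v * s) < (exp (-s) + \<epsilon>/2) * tail v"
    using tail_shift_bounds[of s "\<epsilon>/2"] \<open>0 \<le> s\<close> assms by auto
  show ?thesis
  proof (intro exI[of _ "max 0 (max U1 U2)"] allI impI ballI)
    fix u y assume u: "max 0 (max U1 U2) \<le> u" and y: "y \<in> {0<..1::real}"
    have "tail ((u + a u * t) / y) \<le> tail (u / y)"
      using y assms scale_pos[of u] by (intro tail_antimono divide_right_mono) auto
    show "tail ((u + a u * t) / y) \<le> (exp (-t) + \<epsilon>) * tail (u / y) + tail (2 * u)"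
    proof (cases "y < 1/2")
      case True
      then have "tail (u / y) \<le> tail (2 * u)"
        using y u by (intro tail_antimono) (auto simp: field_simps intro!: mult_left_le)
      moreover have "0 \<le> (exp (-t) + \<epsilon>) * tail (u / y)"
        using tail_gt_0[of "u / y"] assms(2) by (simp add: add_pos_pos less_imp_le)
      ultimately show ?thesis
        using \<open>tail ((u + a u * t) / y) \<le> tail (u / y)\<close> by linarith
    next
      case False
      define h where "h = - ln y"
      have "exp (1::real) \<ge> 2"
        using exp_ge_add_one_self[of 1] by simp
      then have "1/2 * 2 \<le> y * exp 1"
        using False by (intro mult_mono) auto
      then have "exp (-1) \<le> y"
        by (simp add: exp_minus field_simps)
      then have "0 \<le> h" "h \<le> 1"
        using y by (auto simp: h_def ln_ge_iff)
      have "exp h = 1 / y"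
        using y by (simp add: h_def exp_minus inverse_eq_divide)
      define v where "v = exp h * u"
      have "v = u / y"
        using \<open>exp h = 1 / y\<close> by (simp add: v_def)
      have "u \<le> v"
        using \<open>0 \<le> h\<close> u by (simp add: v_def mult_le_cancel_right1)
      have "0 \<le> (1 + \<tau>) * h"
        using index_ge \<open>0 \<le> h\<close> by simp
      then have "exp (-\<tau>*h) \<le> exp h"
        by (simp add: algebra_simps)
      have "a v \<le> (1+\<kappa>) * exp (-\<tau>*h) * a u"
        using U1 u \<open>0 \<le> h\<close> \<open>h \<le> 1\<close> unfolding v_def by auto
      then have "a v * s \<le> (1+\<kappa>) * exp (-\<tau>*h) * a u * s"
        using \<open>0 \<le> s\<close> by (rule mult_right_mono)
      also have "\<dots> = exp (-\<tau>*h) * a u * t"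
        using \<open>\<kappa> > 0\<close> by (simp add: s_def)
      also have "\<dots> \<le> exp h * a u * t"
        using \<open>exp (-\<tau>*h) \<le> exp h\<close> scale_pos[of u] assms(1) by (intro mult_right_mono) auto
      finally have "v + a v * s \<le> (u + a u * t) / y"
        using \<open>v = u / y\<close> \<open>exp h = 1 / y\<close> by (simp add: add_divide_distrib)
      then have "tail ((u + a u * t) / y) \<le> tail (v + a v * s)"
        by (rule tail_antimono)
      also have "\<dots> < (exp (-s) + \<epsilon>/2) * tail v"
        using U2 u \<open>u \<le> v\<close> by auto
      also have "\<dots> \<le> (exp (-t) + \<epsilon>) * tail v"
        using \<open>exp (-s) \<le> exp (-t) + \<epsilon> / 2\<close> tail_gt_0[of v] by (intro mult_right_mono) auto
      finally show ?thesis
        using \<open>v = u / y\<close> tail_gt_0[of "2 * u"] by simp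
    qed
  qed
qed

lemma tail_shift_div_lower:
  assumes "t \<ge> 0" "\<epsilon> > 0"
  shows "\<exists>y\<^sub>0\<in>{0<..<1}. \<exists>U. \<forall>u\<ge>U. \<forall>y\<in>{y\<^sub>0..1}.
    (exp (-t) - \<epsilon>) * tail (u / y) \<le> tail ((u + a u * t) / y)"
proof -
  define \<kappa> where "\<kappa> = min (1/4) (\<epsilon> / (8 * (t + 1)))"
  have "\<kappa> \<le> \<epsilon> / (8 * (t + 1))"
    by (simp add: \<kappa>_def)
  then have "\<kappa> * (8 * (t + 1)) \<le> \<epsilon>"
    using assms by (simp add: le_divide_eq)
  then have \<kappa>: "0 < \<kappa>" "\<kappa> \<le> 1/4" "\<kappa> * (t + 1) \<le> \<epsilon> / 8"
    using assms by (auto simp: \<kappa>_def field_simps)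
  define s where "s = t * (1 + \<kappa>) / (1 - \<kappa>)"
  have "s - t = 2 * t * \<kappa> / (1 - \<kappa>)"
    using \<kappa> by (simp add: s_def field_simps)
  also have "\<dots> \<le> 4 * t * \<kappa>"
  proof -
    have "(t * \<kappa>) * 2 \<le> (t * \<kappa>) * (4 * (1 - \<kappa>))"
      using \<kappa> assms by (intro mult_left_mono) auto
    then show ?thesis
      using \<kappa> by (simp add: divide_le_eq algebra_simps)
  qed
  also have "\<dots> \<le> \<epsilon> / 2"
    using \<kappa> assms by (simp add: field_simps)
  finally have "s - t \<le> \<epsilon> / 2" .
  have "t \<le> s"
    using \<kappa> assms by (simp add: s_def field_simps mult_left_mono)
  then have "exp (-t) - \<epsilon>/2 \<le> exp (-s)"
    using exp_minus_diff_le[OF assms(1)] \<open>s - t \<le> \<epsilon> / 2\<close> by fastforce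
  \<comment> \<open>\<open>2 + \<tau>\<close> rather than \<open>1 + \<tau>\<close>, which vanishes for \<open>\<tau> = -1\<close>\<close>
  define h\<^sub>0 where "h\<^sub>0 = min 1 (ln (1 + \<kappa>) / (2 + \<tau>))"
  have "0 < ln (1 + \<kappa>)" "2 + \<tau> > 0"
    using \<kappa> index_ge by simp_all
  moreover have "h\<^sub>0 \<le> ln (1 + \<kappa>) / (2 + \<tau>)"
    by (simp add: h\<^sub>0_def)
  ultimately have h\<^sub>0: "0 < h\<^sub>0" "h\<^sub>0 \<le> 1" "(2 + \<tau>) * h\<^sub>0 \<le> ln (1 + \<kappa>)"
    by (simp_all add: h\<^sub>0_def le_divide_eq mult.commute)
  obtain U1 where U1: "\<forall>u\<ge>U1. \<forall>h\<in>{0..1}. (1-\<kappa>) * exp (-\<tau>*h) * a u \<le> a (exp h * u)"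
    using uniform_regvar[OF \<kappa>(1)] by fastforce
  obtain U2 where U2: "\<forall>v\<ge>U2. (exp (-s) - \<epsilon>/2) * tail v < tail (v + a v * s)"
    using tail_shift_bounds[of s "\<epsilon>/2"] \<open>t \<le> s\<close> assms by fastforce
  show ?thesis
  proof (intro bexI[of _ "exp (-h\<^sub>0)"] exI[of _ "max 0 (max U1 U2)"] allI impI ballI)
    show "exp (-h\<^sub>0) \<in> {0<..<1}"
      using h\<^sub>0 by simp
    fix u y assume u: "max 0 (max U1 U2) \<le> u" and y: "y \<in> {exp (-h\<^sub>0)..1}"
    then have "y > 0"
      by (auto intro: less_le_trans[OF exp_gt_zero])
    define h where "h = - ln y"
    have "- h\<^sub>0 \<le> ln y"
      using y \<open>y > 0\<close> by (simp add: ln_ge_iff)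
    then have "0 \<le> h" "h \<le> h\<^sub>0"
      using y \<open>y > 0\<close> by (auto simp: h_def)
    have "exp h = 1 / y"
      using \<open>y > 0\<close> by (simp add: h_def exp_minus inverse_eq_divide)
    define v where "v = exp h * u"
    have "v = u / y"
      using \<open>exp h = 1 / y\<close> by (simp add: v_def)
    have "u \<le> v"
      using \<open>0 \<le> h\<close> u by (simp add: v_def mult_le_cancel_right1)
    have "(1 + \<tau>) * h \<le> (2 + \<tau>) * h\<^sub>0"
      using \<open>0 \<le> h\<close> \<open>h \<le> h\<^sub>0\<close> index_ge by (intro mult_mono) auto
    then have "exp ((1 + \<tau>) * h) \<le> 1 + \<kappa>"
      using h\<^sub>0(3) \<kappa>(1) by (metis exp_le_cancel_iff exp_ln add_pos_pos order_trans zero_less_one)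
    have "a u * t / y = exp (-\<tau>*h) * exp ((1 + \<tau>) * h) * a u * t"
      using \<open>exp h = 1 / y\<close> by (simp add: algebra_simps flip: exp_add)
    also have "\<dots> \<le> exp (-\<tau>*h) * (1 + \<kappa>) * a u * t"
      using \<open>exp ((1 + \<tau>) * h) \<le> 1 + \<kappa>\<close> scale_pos[of u] assms(1)
      by (intro mult_right_mono mult_left_mono) auto
    also have "\<dots> = ((1 - \<kappa>) * exp (-\<tau>*h) * a u) * s"
      using \<kappa> by (simp add: s_def field_simps)
    also have "\<dots> \<le> a v * s"
      using U1 u \<open>0 \<le> h\<close> \<open>h \<le> h\<^sub>0\<close> h\<^sub>0(2) \<open>t \<le> s\<close> assms(1)
      by (intro mult_right_mono) (auto simp: v_def)
    finally have "(u + a u * t) / y \<le> v + a v * s"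
      using \<open>v = u / y\<close> by (simp add: add_divide_distrib)
    have "(exp (-t) - \<epsilon>) * tail v \<le> (exp (-s) - \<epsilon>/2) * tail v"
      using \<open>exp (-t) - \<epsilon>/2 \<le> exp (-s)\<close> assms tail_gt_0[of v] by (intro mult_right_mono) auto
    also have "\<dots> < tail (v + a v * s)"
      using U2 u \<open>u \<le> v\<close> by auto
    also have "\<dots> \<le> tail ((u + a u * t) / y)"
      using \<open>(u + a u * t) / y \<le> v + a v * s\<close> by (rule tail_antimono)
    finally show "(exp (-t) - \<epsilon>) * tail (u / y) \<le> tail ((u + a u * t) / y)"
      using \<open>v = u / y\<close> by simp
  qed
qed

end

section \<open>The tail of the product\<close>

locale gumbel_product = gumbel_tail M X a \<tau> for M :: "'s measure" and X a \<tau> +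
  fixes Y :: "'s \<Rightarrow> real"
  assumes Y_measurable[measurable]: "Y \<in> borel_measurable M"
    and indep: "indep_var borel X borel Y"
    and Y_pos: "w \<in> space M \<Longrightarrow> Y w > 0"
    and Y_endpoint: "right_endpoint M Y = 1"
begin

definition prod_tail :: "real \<Rightarrow> real" where
  "prod_tail v = prob {w \<in> space M. X w * Y w > v}"

lemma prod_tail_eq: "prod_tail v = expectation (\<lambda>w. tail (v / Y w))"
  using prob_product_gt[OF X_measurable Y_measurable indep Y_pos]
  by (simp add: prod_tail_def tail_def)

lemma AE_Y_le_1: "AE w in M. Y w \<le> 1"
  using AE_le_right_endpoint[of Y 1] Y_endpoint by (simp add: one_ereal_def)

lemma prob_Y_gt_pos: "x < 1 \<Longrightarrow> prob {w \<in> space M. Y w > x} > 0"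
  using prob_gt_below_right_endpoint[of Y 1 x] Y_endpoint by (simp add: one_ereal_def)

lemma integrable_tail_div[simp]: "integrable M (\<lambda>w. tail (v / Y w))"
  using tail_le_1 tail_gt_0 by (intro integrable_const_bound[where B=1]) (auto simp: less_imp_le)

lemma prob_Y_gt_mult_tail_le_prod_tail:
  assumes "u \<ge> 0" "y > 0"
  shows "prob {w \<in> space M. Y w > y} * tail (u / y) \<le> prod_tail u"
proof -
  let ?S = "{w \<in> space M. Y w > y}"
  have "prob ?S * tail (u / y) = expectation (\<lambda>w. indicator ?S w * tail (u / y))"
    by simp
  also have "\<dots> \<le> expectation (\<lambda>w. tail (u / Y w))"
  proof (rule integral_mono)
    show "integrable M (\<lambda>w. indicator ?S w * tail (u / y))"
      by (intro integrable_mult_left integrable_real_indicator) (auto simp: emeasure_eq_measure)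
    fix w assume "w \<in> space M"
    show "indicator ?S w * tail (u / y) \<le> tail (u / Y w)"
    proof (cases "w \<in> ?S")
      case True
      then have "u / Y w \<le> u / y"
        using assms by (intro divide_left_mono) auto
      then show ?thesis
        using True by (simp add: tail_antimono)
    qed (use tail_gt_0[of "u / Y w"] in simp)
  qed simp
  finally show ?thesis
    by (simp add: prod_tail_eq)
qed

lemma prod_tail_pos:
  assumes "u \<ge> 0"
  shows "prod_tail u > 0"
proof -
  have "0 < prob {w \<in> space M. Y w > 1/2} * tail (u / (1/2))"
    using prob_Y_gt_pos[of "1/2"] tail_gt_0 by simp
  also have "\<dots> \<le> prod_tail u"
    by (rule prob_Y_gt_mult_tail_le_prod_tail[OF assms]) simp
  finally show ?thesis .
qed

lemma prod_tail_shift_upper: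
  assumes "t \<ge> 0" "\<epsilon> > 0"
  shows "\<exists>U. \<forall>u\<ge>U. prod_tail (u + a u * t) \<le> (exp (-t) + \<epsilon>) * prod_tail u"
proof -
  obtain U1 where U1: "\<forall>u\<ge>U1. \<forall>y\<in>{0<..1}.
      tail ((u + a u * t) / y) \<le> (exp (-t) + \<epsilon>/2) * tail (u / y) + tail (2 * u)"
    using tail_shift_div_upper[of t "\<epsilon>/2"] assms by auto
  define p where "p = prob {w \<in> space M. Y w > 3/4}"
  have "p > 0"
    using prob_Y_gt_pos[of "3/4"] by (simp add: p_def)
  obtain U2 where U2: "\<forall>x\<ge>U2. tail (3/2 * x) \<le> (\<epsilon>/2 * p) * tail x"
    using tail_rapid_decay[of "3/2" "\<epsilon>/2 * p"] assms \<open>p > 0\<close> by auto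
  show ?thesis
  proof (intro exI[of _ "max (max U1 0) (3/4 * U2)"] allI impI)
    fix u assume u: "max (max U1 0) (3/4 * U2) \<le> u"
    have "AE w in M. tail ((u + a u * t) / Y w) \<le> (exp (-t) + \<epsilon>/2) * tail (u / Y w) + tail (2 * u)"
      using AE_space AE_Y_le_1 by eventually_elim (use U1 u Y_pos in auto)
    then have "prod_tail (u + a u * t) \<le> expectation (\<lambda>w. (exp (-t) + \<epsilon>/2) * tail (u / Y w) + tail (2 * u))"
      unfolding prod_tail_eq by (intro integral_mono_AE) auto
    also have "\<dots> = (exp (-t) + \<epsilon>/2) * prod_tail u + tail (2 * u)"
      by (simp add: prod_tail_eq prob_space)
    also have "tail (2 * u) \<le> \<epsilon>/2 * prod_tail u"
    proof -
      have "tail (2 * u) = tail (3/2 * (u / (3/4)))"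
        by simp
      also have "\<dots> \<le> (\<epsilon>/2 * p) * tail (u / (3/4))"
      proof -
        have "U2 \<le> u / (3/4)"
          using u by simp
        with U2 show ?thesis by blast
      qed
      also have "\<dots> = \<epsilon>/2 * (p * tail (u / (3/4)))"
        by simp
      also have "\<dots> \<le> \<epsilon>/2 * prod_tail u"
        using prob_Y_gt_mult_tail_le_prod_tail[of u "3/4"] u assms by (intro mult_left_mono) (auto simp: p_def)
      finally show ?thesis .
    qed
    finally show "prod_tail (u + a u * t) \<le> (exp (-t) + \<epsilon>) * prod_tail u"
      by (simp add: algebra_simps)
  qed
qed

lemma prod_tail_shift_lower:
  assumes "t \<ge> 0" "\<epsilon> > 0"
  shows "\<exists>U. \<forall>u\<ge>U. (exp (-t) - \<epsilon>) * prod_tail u \<le> prod_tail (u + a u * t)"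
proof -
  obtain y\<^sub>0 U1 where y\<^sub>0: "y\<^sub>0 \<in> {0<..<1}" and U1: "\<forall>u\<ge>U1. \<forall>y\<in>{y\<^sub>0..1}.
      (exp (-t) - \<epsilon>/2) * tail (u / y) \<le> tail ((u + a u * t) / y)"
    using tail_shift_div_lower[of t "\<epsilon>/2"] assms by auto
  define y\<^sub>1 where "y\<^sub>1 = (1 + y\<^sub>0) / 2"
  have y\<^sub>1: "y\<^sub>0 < y\<^sub>1" "y\<^sub>1 < 1"
    using y\<^sub>0 by (auto simp: y\<^sub>1_def)
  define p where "p = prob {w \<in> space M. Y w > y\<^sub>1}"
  have "p > 0"
    using prob_Y_gt_pos[OF y\<^sub>1(2)] by (simp add: p_def)
  obtain U2 where U2: "\<forall>x\<ge>U2. tail (y\<^sub>1 / y\<^sub>0 * x) \<le> (\<epsilon>/2 * p) * tail x"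
    using tail_rapid_decay[of "y\<^sub>1 / y\<^sub>0" "\<epsilon>/2 * p"] y\<^sub>0 y\<^sub>1 assms \<open>p > 0\<close> by auto
  show ?thesis
  proof (intro exI[of _ "max (max U1 0) (y\<^sub>1 * U2)"] allI impI)
    fix u assume u: "max (max U1 0) (y\<^sub>1 * U2) \<le> u"
    have pointwise: "(exp (-t) - \<epsilon>/2) * tail (u / y) - tail (u / y\<^sub>0) \<le> tail ((u + a u * t) / y)"
      if y: "y \<in> {0<..1}" for y
    proof (cases "y\<^sub>0 \<le> y")
      case True
      then have "(exp (-t) - \<epsilon>/2) * tail (u / y) \<le> tail ((u + a u * t) / y)"
        using U1 u y by auto
      then show ?thesis
        using tail_gt_0[of "u / y\<^sub>0"] by linarith
    next
      case False
      have "exp (-t) - \<epsilon>/2 \<le> exp (-t)"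
        using assms by simp
      also have "\<dots> \<le> 1"
        using assms by simp
      finally have "(exp (-t) - \<epsilon>/2) * tail (u / y) \<le> 1 * tail (u / y)"
        using tail_gt_0[of "u / y"] by (intro mult_right_mono) auto
      moreover have "tail (u / y) \<le> tail (u / y\<^sub>0)"
        using False y y\<^sub>0 u by (intro tail_antimono divide_left_mono) auto
      ultimately show ?thesis
        using tail_gt_0[of "(u + a u * t) / y"] by simp
    qed
    have "AE w in M. (exp (-t) - \<epsilon>/2) * tail (u / Y w) - tail (u / y\<^sub>0) \<le> tail ((u + a u * t) / Y w)"
      using AE_space AE_Y_le_1 by eventually_elim (use pointwise Y_pos in auto)
    then have "expectation (\<lambda>w. (exp (-t) - \<epsilon>/2) * tail (u / Y w) - tail (u / y\<^sub>0)) \<le> prod_tail (u + a u * t)"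
      unfolding prod_tail_eq by (intro integral_mono_AE) auto
    moreover have "expectation (\<lambda>w. (exp (-t) - \<epsilon>/2) * tail (u / Y w) - tail (u / y\<^sub>0))
        = (exp (-t) - \<epsilon>/2) * prod_tail u - tail (u / y\<^sub>0)"
      by (simp add: prod_tail_eq prob_space)
    moreover have "tail (u / y\<^sub>0) \<le> \<epsilon>/2 * prod_tail u"
    proof -
      have "tail (u / y\<^sub>0) = tail (y\<^sub>1 / y\<^sub>0 * (u / y\<^sub>1))"
        using y\<^sub>0 y\<^sub>1 by simp
      also have "\<dots> \<le> (\<epsilon>/2 * p) * tail (u / y\<^sub>1)"
      proof -
        have "U2 \<le> u / y\<^sub>1"
          using u y\<^sub>0 y\<^sub>1 by (simp add: le_divide_eq mult.commute)
        with U2 show ?thesis by blast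
      qed
      also have "\<dots> = \<epsilon>/2 * (p * tail (u / y\<^sub>1))"
        by simp
      also have "\<dots> \<le> \<epsilon>/2 * prod_tail u"
        using prob_Y_gt_mult_tail_le_prod_tail[of u y\<^sub>1] u y\<^sub>0 y\<^sub>1 assms
        by (intro mult_left_mono) (auto simp: p_def)
      finally show ?thesis .
    qed
    ultimately show "(exp (-t) - \<epsilon>) * prod_tail u \<le> prod_tail (u + a u * t)"
      by (simp add: algebra_simps)
  qed
qed

lemma gmda_product: "GMDA M (\<lambda>w. X w * Y w) a"
  unfolding GMDA_def
proof (intro allI impI)
  fix t :: real assume "t \<ge> 0"
  have "((\<lambda>u. prod_tail (u + a u * t) / prod_tail u) \<longlongrightarrow> exp (-t)) at_top"
  proof (rule tendsto_ratio_of_eventual_bounds)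
    show "\<forall>\<^sub>F u in at_top. prod_tail u > 0"
      using eventually_ge_at_top[of "0::real"] by (rule eventually_mono) (rule prod_tail_pos)
    fix \<epsilon> :: real assume "\<epsilon> > 0"
    have "\<forall>\<^sub>F u in at_top. (exp (-t) - \<epsilon>) * prod_tail u \<le> prod_tail (u + a u * t)"
      using prod_tail_shift_lower[OF \<open>t \<ge> 0\<close> \<open>\<epsilon> > 0\<close>] by (simp add: eventually_at_top_linorder)
    moreover have "\<forall>\<^sub>F u in at_top. prod_tail (u + a u * t) \<le> (exp (-t) + \<epsilon>) * prod_tail u"
      using prod_tail_shift_upper[OF \<open>t \<ge> 0\<close> \<open>\<epsilon> > 0\<close>] by (simp add: eventually_at_top_linorder)
    ultimately show "\<forall>\<^sub>F u in at_top. (exp (-t) - \<epsilon>) * prod_tail u \<le> prod_tail (u + a u * t)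
        \<and> prod_tail (u + a u * t) \<le> (exp (-t) + \<epsilon>) * prod_tail u"
      by (rule eventually_conj)
  qed
  then show "((\<lambda>u. measure M {w \<in> space M. X w * Y w > u + a u * t} / measure M {w \<in> space M. X w * Y w > u})
      \<longlongrightarrow> exp (- t)) at_top"
    by (simp add: prod_tail_def)
qed

end

theorem theorem1p1:
  fixes M :: "'s measure" and Y1 Y2 :: "'s \<Rightarrow> real" and a :: "real \<Rightarrow> real" and \<tau> :: real
  assumes "prob_space M"
    and "Y1 \<in> borel_measurable M" and "Y2 \<in> borel_measurable M"
    and "prob_space.indep_var M borel Y1 borel Y2"
    and "\<forall>w \<in> space M. Y1 w > 0" and "\<forall>w \<in> space M. Y2 w > 0"
    and "\<forall>u. measure M {w \<in> space M. Y1 w > u} > 0"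
    and "\<forall>u. a u > 0"
    and "\<tau> \<ge> -1" and "regularly_varying a (- \<tau>)"
    and "GMDA M Y1 a"
    and "right_endpoint M Y2 = 1"
  shows "GMDA M (\<lambda>w. Y1 w * Y2 w) a"
proof -
  interpret gumbel_product M Y1 a \<tau> Y2
    using assms(1-4,6-12)
    by (intro gumbel_product.intro gumbel_tail.intro gumbel_product_axioms.intro gumbel_tail_axioms.intro)
       (simp_all add: prob_space.prob_space)
  show ?thesis
    by (rule gmda_product)
qed

end
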